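(* Let $(c_n)_{n\ge 0}$ be the sequence defined in the context. Then $c_0=0$, $c_1=c_2=1$, $c_3=0$, and $$c_{8n-1}=c_{8n}=c_{8n+1}=c_{8n+2}=c_{2n-1}\quad\text{for all } n\ge 1,$$ $$c_{8n+3}=c_{8n+4}=c_{8n+5}=c_{8n+6}=0\quad\text{for all } n\ge 0.$$
   Context: For $n\in\mathbb{N}$ let $s_2(n)$ be the sum of the binary digits of $n$ and $t_n=s_2(n)\bmod 2$ (the Prouhet–Thue–Morse sequence). Let $F(X)=\sum_{n\ge1}t_nX^n\in\mathbb{F}_2[[X]]$ and let $G(X)=\sum_{n\ge1}c_nX^n\in\mathbb{F}_2[[X]]$ be its compositional inverse, i.e. $F(G(X))=G(F(X))=X$; set $c_0=0$. The $c_n$ are identified with integers in $\{0,1\}$. *)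

theory Defs
  imports "HOL-Library.Z2" "HOL-Computational_Algebra.Formal_Power_Series"
begin

fun s2 :: "nat \<Rightarrow> nat" where
  "s2 n = (if n = 0 then 0 else n mod 2 + s2 (n div 2))"

declare s2.simps[simp del]

definition tm :: "nat \<Rightarrow> bit" where
  "tm n = of_nat (s2 n mod 2)"

definition TM_F :: "bit fps" where
  "TM_F = Abs_fps (\<lambda>n. if n = 0 then 0 else tm n)"

end

(*
  Over F_2 the relations t(2n) = t(n), t(2n+1) = t(n) + 1 and the Frobenius identity
  F(X)^2 = F(X^2) give the functional equation (1+X)^3 F^2 + (1+X)^2 F = X.  Composing with G
  turns it into P(G) = 0 for P(Y) = (1+Y)^3 X^2 + (1+Y)^2 X - Y, and P has at most one root
  because P(A) - P(B) = (A - B) W with W(0) = -1.  On the other hand the series C whose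
  coefficients obey the recurrence read off from X^3 C^4 + (1+X) C = X + X^3 is a root of P,
  since in characteristic 2 this quartic is (XC + 1 + X) P(C).  Hence G = C, and the pattern of
  coefficients follows from the recurrence by induction over blocks of length 8.
*)

theory Submission
  imports Defs
begin

unbundle fps_syntax

(* Keep sums and products of bits as ring operations instead of letting simp split them
   into xor/and case distinctions. *)
declare add_bit_eq_xor [simp del] mult_bit_eq_and [simp del] power_bit_unfold [simp del]

lemma bit_add_self [simp]: "(x::bit) + x = 0"
  by (cases x) simp_all

lemma bit_mult_self [simp]: "(x::bit) * x = x"
  by (cases x) simp_all

lemma two_bit_fps: "(2::bit fps) = 0"
  by (simp only: fps_numeral_fps_const bit_2_eq_0 fps_const_0_eq_0)

lemma sum_atLeast0AtMost_symmetric_bit: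
  fixes g :: "nat \<Rightarrow> bit"
  assumes "\<And>i. i \<le> n \<Longrightarrow> g (n - i) = g i"
  shows "(\<Sum>i=0..n. g i) = (if even n then g (n div 2) else 0)"
proof -
  define A where "A = {i. i \<le> n \<and> 2*i < n}"
  define B where "B = {i. i \<le> n \<and> 2*i > n}"
  have split: "{0..n} = A \<union> B \<union> {i. 2*i = n}"
    unfolding A_def B_def by auto
  have "sum g B = sum g A"
    by (rule sum.reindex_bij_witness[of B "\<lambda>i. n - i" "\<lambda>i. n - i"])
       (auto simp: A_def B_def assms)
  moreover have "sum g {i. 2*i = n} = (if even n then g (n div 2) else 0)"
  proof (cases "even n")
    case False
    then have "{i. 2*i = n} = {}" by auto
    with False show ?thesis by simp
  qed (auto elim!: evenE)
  moreover have "sum g {0..n} = sum g A + sum g B + sum g {i. 2*i = n}"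
  proof -
    have "finite A" "finite B" "finite {i. 2*i = n}"
      unfolding A_def B_def by (auto intro: finite_subset[of _ "{0..n}"])
    moreover have "A \<inter> B = {}" "(A \<union> B) \<inter> {i. 2*i = n} = {}"
      unfolding A_def B_def by auto
    ultimately show ?thesis
      unfolding split by (simp add: sum.union_disjoint)
  qed
  ultimately show ?thesis
    by simp
qed

lemma fps_square_nth_bit: "((A::bit fps)^2) $ n = (if even n then A $ (n div 2) else 0)"
proof -
  have "(A^2) $ n = (\<Sum>i=0..n. A$i * A$(n-i))"
    by (simp add: power2_eq_square fps_mult_nth)
  also have "\<dots> = (if even n then A$(n div 2) * A$(n - n div 2) else 0)"
    by (rule sum_atLeast0AtMost_symmetric_bit) (simp add: mult.commute)
  also have "\<dots> = (if even n then A $ (n div 2) else 0)"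
    by (auto elim!: evenE)
  finally show ?thesis .
qed

lemma fps_pow4_nth_bit: "((A::bit fps)^4) $ n = (if 4 dvd n then A $ (n div 4) else 0)"
proof -
  have "(A^4) $ n = ((A^2)^2) $ n" by (simp flip: power_mult)
  also have "\<dots> = (if 4 dvd n then A $ (n div 4) else 0)"
    by (simp only: fps_square_nth_bit) (auto simp: div_mult2_eq)
  finally show ?thesis .
qed

lemma s2_double: "s2 (2*n) = s2 n"
  by (cases "n = 0") (simp_all add: s2.simps[of "2*n"])

lemma s2_Suc_double: "s2 (Suc (2*n)) = Suc (s2 n)"
  by (simp add: s2.simps[of "Suc (2*n)"])

lemma tm_0: "tm 0 = 0"
  by (simp add: tm_def s2.simps)

lemma tm_double: "tm (2*n) = tm n"
  by (simp add: tm_def s2_double)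

lemma tm_Suc_double: "tm (Suc (2*n)) = tm n + 1"
  by (cases "even (s2 n)") (auto simp: tm_def s2_Suc_double mod_Suc elim!: evenE oddE)

lemma TM_F_nth: "TM_F $ n = tm n"
  by (simp add: TM_F_def tm_0)

lemma one_plus_X_mult_nth:
  "((1 + fps_X) * f) $ n = f $ n + (if n = 0 then 0 else f $ (n - 1))"
  for f :: "'a::comm_ring_1 fps"
proof -
  have "(1 + fps_X) * f = f + fps_X * f"
    by (simp add: distrib_right)
  then show ?thesis
    by simp
qed

lemma TM_F_square_eq:
  "(1 + fps_X) * TM_F^2 + TM_F = Abs_fps (\<lambda>n. if odd n then 1 else 0)"
proof (rule fps_ext)
  fix n
  consider "n = 0" | k where "n = 2*k" "k > 0" | k where "n = Suc (2*k)"
    by (cases "even n") (fastforce elim!: evenE oddE)+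
  then show "((1 + fps_X) * TM_F^2 + TM_F) $ n = Abs_fps (\<lambda>n. if odd n then 1 else 0) $ n"
    by cases
      (simp_all add: one_plus_X_mult_nth fps_square_nth_bit TM_F_nth tm_0 tm_double tm_Suc_double)
qed

lemma one_plus_X_square_bit: "(1 + fps_X :: bit fps)^2 = 1 + fps_X^2"
  by (simp add: power2_sum two_bit_fps)

lemma odd_indicator_fps: "(1 + fps_X^2) * Abs_fps (\<lambda>n. if odd n then 1 else (0::bit)) = fps_X"
proof (rule fps_ext)
  fix n
  show "((1 + fps_X^2) * Abs_fps (\<lambda>n. if odd n then 1 else (0::bit))) $ n = fps_X $ n"
    by (auto simp: distrib_right fps_X_power_mult_nth fps_X_nth elim: oddE)
qed

lemma TM_F_functional_equation:
  "(1 + fps_X)^3 * TM_F^2 + (1 + fps_X)^2 * TM_F = fps_X"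
proof -
  have "(1 + fps_X)^3 * TM_F^2 + (1 + fps_X)^2 * TM_F
      = (1 + fps_X)^2 * ((1 + fps_X) * TM_F^2 + TM_F)"
    by (simp add: distrib_left power3_eq_cube power2_eq_square mult.assoc)
  then show ?thesis
    by (simp only: TM_F_square_eq one_plus_X_square_bit odd_indicator_fps)
qed

definition tm_inverse_poly :: "'a::comm_ring_1 fps \<Rightarrow> 'a fps" where
  "tm_inverse_poly Y = (1 + Y)^3 * fps_X^2 + (1 + Y)^2 * fps_X - Y"

lemma tm_inverse_poly_root_unique:
  fixes A B :: "'a::idom fps"
  assumes "tm_inverse_poly A = 0" "tm_inverse_poly B = 0"
  shows "A = B"
proof -
  define W :: "'a fps" where
    "W = fps_X * (fps_X * ((1+A)^2 + (1+A)*(1+B) + (1+B)^2) + (1+A) + (1+B)) - 1"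
  have "(A - B) * W = tm_inverse_poly A - tm_inverse_poly B"
    unfolding W_def tm_inverse_poly_def
    by (simp add: algebra_simps power2_eq_square power3_eq_cube)
  then have "(A - B) * W = 0"
    using assms by simp
  moreover have "W \<noteq> 0"
  proof
    assume "W = 0"
    then have "W $ 0 = 0" by simp
    then show False unfolding W_def by simp
  qed
  ultimately show ?thesis by simp
qed

lemma tm_inverse_poly_root_of_inverse:
  assumes "G $ 0 = 0" "TM_F oo G = fps_X"
  shows "tm_inverse_poly G = 0"
proof -
  have "((1 + fps_X)^3 * TM_F^2 + (1 + fps_X)^2 * TM_F) oo G = fps_X oo G"
    by (simp only: TM_F_functional_equation)
  then have "(1 + G)^3 * fps_X^2 + (1 + G)^2 * fps_X = G"
    using assms
    by (simp add: fps_compose_add_distrib fps_compose_mult_distrib flip: fps_compose_power)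
  then show ?thesis
    unfolding tm_inverse_poly_def by simp
qed

lemma quartic_factorization_char2:
  fixes X H :: "'a::comm_ring_1"
  assumes "(2::'a) = 0"
  shows "(X*H + 1 + X) * ((1 + H)^3 * X^2 + (1 + H)^2 * X - H) = X^3*H^4 + (1 + X)*H + X + X^3"
proof -
  have "(X*H + 1 + X) * ((1 + H)^3 * X^2 + (1 + H)^2 * X - H) = X^3*H^4 + (1 + X)*H + X + X^3
    + 2 * (X^2 - H + 3*X^2*H + 3*X^2*H^2 + X^2*H^3 + 2*X^3*H + 3*X^3*H^2 + 2*X^3*H^3)"
    by (simp add: algebra_simps eval_nat_numeral)
  then show ?thesis
    using assms by simp
qed

(* The recurrence is X^3 C^4 + (1+X) C = X + X^3 read coefficientwise,
   using C^4 $ n = C $ (n div 4) if 4 dvd n and 0 otherwise. *)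
function tm_inv_coeff :: "nat \<Rightarrow> bit" where
  "tm_inv_coeff 0 = 0"
| "tm_inv_coeff (Suc n) = tm_inv_coeff n
     + (if Suc n mod 4 = 3 then tm_inv_coeff (Suc n div 4) else 0)
     + (if Suc n = 1 \<or> Suc n = 3 then 1 else 0)"
  by pat_completeness auto
termination
  by (relation "measure id") auto

declare tm_inv_coeff.simps(2) [simp del]

lemma tm_inv_coeff_step:
  assumes "n = Suc p" "n mod 4 \<noteq> 3" "n \<noteq> 1"
  shows "tm_inv_coeff n = tm_inv_coeff p"
  using assms by (simp add: tm_inv_coeff.simps(2)) presburger

lemma tm_inv_coeff_4m3:
  "tm_inv_coeff (4*m + 3) = tm_inv_coeff (4*m + 2) + tm_inv_coeff m + (if m = 0 then 1 else 0)"
proof -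
  have "4*m + 3 = Suc (4*m + 2)" "Suc (4*m + 2) mod 4 = 3" "Suc (4*m + 2) div 4 = m"
    "(Suc (4*m + 2) = 1 \<or> Suc (4*m + 2) = 3) \<longleftrightarrow> m = 0"
    by presburger+
  then show ?thesis
    by (simp only: tm_inv_coeff.simps(2) simp_thms if_True)
qed

lemma tm_inv_coeff_small: "tm_inv_coeff 1 = 1" "tm_inv_coeff 2 = 1" "tm_inv_coeff 3 = 0"
proof -
  show c1: "tm_inv_coeff 1 = 1"
    using tm_inv_coeff.simps(2)[of 0] by simp
  show c2: "tm_inv_coeff 2 = 1"
    using tm_inv_coeff_step[of 2 1] c1 by simp
  show "tm_inv_coeff 3 = 0"
    using tm_inv_coeff_4m3[of 0] c2 by (simp add: numeral_2_eq_2)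
qed

lemma tm_inv_coeff_block:
  assumes "3 \<le> j" "j \<le> 6"
  shows "tm_inv_coeff (4*m + j) = tm_inv_coeff (4*m + 3)"
  using assms
proof (induction j rule: dec_induct)
  case (step j)
  then have "tm_inv_coeff (4*m + Suc j) = tm_inv_coeff (4*m + j)"
    by (intro tm_inv_coeff_step) presburger+
  with step show ?case by simp
qed simp

lemma tm_inv_coeff_4m7: "tm_inv_coeff (4*m + 7) = tm_inv_coeff (4*m + 3) + tm_inv_coeff (m + 1)"
proof -
  have "tm_inv_coeff (4*m + 7) = tm_inv_coeff (4*m + 6) + tm_inv_coeff (m + 1)"
    using tm_inv_coeff_4m3[of "m + 1"] by (simp add: algebra_simps)
  then show ?thesis
    using tm_inv_coeff_block[of 6 m] by simp
qed

lemma tm_inv_coeff_8n3: "tm_inv_coeff (8*n + 3) = 0"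
proof (induction n)
  case 0
  then show ?case using tm_inv_coeff_small by simp
next
  case (Suc n)
  have "tm_inv_coeff (8*Suc n + 3) = tm_inv_coeff (8*n + 7) + tm_inv_coeff (2*n + 2)"
    using tm_inv_coeff_4m7[of "2*n + 1"] by (simp add: algebra_simps)
  also have "\<dots> = tm_inv_coeff (8*n + 3) + (tm_inv_coeff (2*n + 1) + tm_inv_coeff (2*n + 1))"
  proof -
    have "tm_inv_coeff (2*n + 2) = tm_inv_coeff (2*n + 1)"
      by (rule tm_inv_coeff_step) presburger+
    then show ?thesis
      using tm_inv_coeff_4m7[of "2*n"] by (simp add: add.assoc)
  qed
  finally show ?case
    using Suc.IH by simp
qed

lemma tm_inv_coeff_8n_block_zero:
  assumes "3 \<le> j" "j \<le> 6"
  shows "tm_inv_coeff (8*n + j) = 0"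
  using tm_inv_coeff_block[OF assms, of "2*n"] tm_inv_coeff_8n3[of n] by simp

lemma tm_inv_coeff_8n_block:
  assumes "7 \<le> j" "j \<le> 10"
  shows "tm_inv_coeff (8*n + j) = tm_inv_coeff (2*n + 1)"
proof -
  have "tm_inv_coeff (8*n + j) = tm_inv_coeff (4*(2*n + 1) + (j - 4))"
    using assms by (simp add: algebra_simps)
  also have "\<dots> = tm_inv_coeff (8*n + 7)"
    using tm_inv_coeff_block[of "j - 4" "2*n + 1"] assms by (simp add: algebra_simps)
  also have "\<dots> = tm_inv_coeff (2*n + 1)"
    using tm_inv_coeff_4m7[of "2*n"] tm_inv_coeff_8n3[of n] by (simp add: algebra_simps)
  finally show ?thesis .
qed

lemma tm_inv_fps_quartic:
  "fps_X^3 * Abs_fps tm_inv_coeff ^ 4 + (1 + fps_X) * Abs_fps tm_inv_coeff + fps_X + fps_X^3 = 0"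
proof (rule fps_ext)
  fix n
  show "(fps_X^3 * Abs_fps tm_inv_coeff ^ 4 + (1 + fps_X) * Abs_fps tm_inv_coeff + fps_X + fps_X^3) $ n
    = 0 $ n"
  proof (cases n)
    case 0
    then show ?thesis by (simp add: fps_X_power_mult_nth one_plus_X_mult_nth)
  next
    case (Suc m)
    show ?thesis
    proof (cases "Suc m mod 4 = 3")
      case True
      then have "\<not> Suc m < 3" "4 dvd (Suc m - 3)" "(Suc m - 3) div 4 = Suc m div 4"
        by presburger+
      with True Suc show ?thesis
        by (simp add: fps_X_power_mult_nth one_plus_X_mult_nth fps_pow4_nth_bit
            fps_X_nth tm_inv_coeff.simps(2) add.assoc)
    next
      case False
      then have "Suc m < 3 \<or> \<not> 4 dvd (Suc m - 3)"
        by presburger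
      with False Suc show ?thesis
        by (auto simp add: fps_X_power_mult_nth one_plus_X_mult_nth fps_pow4_nth_bit
            fps_X_nth tm_inv_coeff.simps(2) add.assoc)
    qed
  qed
qed

lemma tm_inv_fps_root: "tm_inverse_poly (Abs_fps tm_inv_coeff) = 0"
proof -
  define C where "C = Abs_fps tm_inv_coeff"
  have "(fps_X*C + 1 + fps_X) * tm_inverse_poly C = 0"
    using quartic_factorization_char2[OF two_bit_fps, of fps_X C] tm_inv_fps_quartic
    unfolding tm_inverse_poly_def C_def by simp
  moreover have "fps_X*C + 1 + fps_X \<noteq> 0"
    by (rule fps_nonzeroI[of _ 0]) simp
  ultimately show ?thesis
    unfolding C_def by simp
qed

theorem mainTheorem2:
  fixes G :: "bit fps"
  assumes "fps_nth G 0 = 0"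
    and "TM_F oo G = fps_X"
    and "G oo TM_F = fps_X"
  shows "fps_nth G 0 = 0 \<and> fps_nth G 1 = 1 \<and> fps_nth G 2 = 1 \<and> fps_nth G 3 = 0
    \<and> (\<forall>n::nat. n \<ge> 1 \<longrightarrow>
          fps_nth G (8*n - 1) = fps_nth G (2*n - 1) \<and> fps_nth G (8*n) = fps_nth G (2*n - 1)
        \<and> fps_nth G (8*n + 1) = fps_nth G (2*n - 1) \<and> fps_nth G (8*n + 2) = fps_nth G (2*n - 1))
    \<and> (\<forall>n::nat. fps_nth G (8*n + 3) = 0 \<and> fps_nth G (8*n + 4) = 0
        \<and> fps_nth G (8*n + 5) = 0 \<and> fps_nth G (8*n + 6) = 0)"
proof -
  have "G = Abs_fps tm_inv_coeff"
    using tm_inverse_poly_root_of_inverse[OF assms(1,2)] tm_inv_fps_root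
    by (rule tm_inverse_poly_root_unique)
  then have coeff: "fps_nth G n = tm_inv_coeff n" for n
    by simp
  have block: "tm_inv_coeff (8*n - 1 + i) = tm_inv_coeff (2*n - 1)"
    if n_pos: "n \<ge> 1" and i_le: "i \<le> 3" for n i
  proof -
    obtain k where "n = Suc k"
      using n_pos by (cases n) auto
    then show ?thesis
      using tm_inv_coeff_8n_block[of "7 + i" k] i_le by (simp add: algebra_simps)
  qed
  show ?thesis
    unfolding coeff
    using tm_inv_coeff_small block[of _ 0] block[of _ 1] block[of _ 2] block[of _ 3]
    by (simp add: tm_inv_coeff_8n_block_zero)
qed

end
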